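(* For every integer $n\ge 1$, every independence root $z$ of every finite simple graph on $n$ vertices satisfies $|z|\le 3^{\frac{n}{3}}+n-1$. That is, $M(n)\le 3^{\frac{n}{3}}+n-1$, where $M(n)$ is the maximum modulus of an independence root over all graphs on $n$ vertices.
   Context: For a finite simple graph $G$, the independence polynomial is $i(G,x)=\sum_{k=0}^{\alpha(G)} i_k x^k$, where $i_k$ is the number of independent sets of size $k$ in $G$ (with $i_0=1$) and $\alpha(G)$ is the independence number. Its complex roots are the independence roots of $G$. *)

theory Defs
  imports "HOL-Analysis.Analysis" "HOL-Computational_Algebra.Polynomial"
begin

definition simple_graph :: "'a set \<Rightarrow> ('a \<Rightarrow> 'a \<Rightarrow> bool) \<Rightarrow> bool" where
  "simple_graph V E \<longleftrightarrow> finite V \<and> (\<forall>x\<in>V. \<not> E x x) \<and>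
     (\<forall>x\<in>V. \<forall>y\<in>V. E x y \<longrightarrow> E y x)"

definition independent_set :: "'a set \<Rightarrow> ('a \<Rightarrow> 'a \<Rightarrow> bool) \<Rightarrow> 'a set \<Rightarrow> bool" where
  "independent_set V E S \<longleftrightarrow> S \<subseteq> V \<and> (\<forall>x\<in>S. \<forall>y\<in>S. \<not> E x y)"

definition indep_poly :: "'a set \<Rightarrow> ('a \<Rightarrow> 'a \<Rightarrow> bool) \<Rightarrow> complex poly" where
  "indep_poly V E = (\<Sum>S\<in>{S. independent_set V E S}. monom 1 (card S))"

definition independence_root :: "'a set \<Rightarrow> ('a \<Rightarrow> 'a \<Rightarrow> bool) \<Rightarrow> complex \<Rightarrow> bool" where
  "independence_root V E z \<longleftrightarrow> poly (indep_poly V E) z = 0"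

end

theory Submission
  imports Defs
begin

text \<open>
  If a real polynomial \<open>a\<^sub>0 + a\<^sub>1 z + ... + a\<^sub>m z\<^sup>m\<close> has \<open>0 \<le> a\<^sub>0\<close>, \<open>0 < a\<^sub>m\<close> and
  \<open>a\<^sub>k \<le> B a\<^sub>k\<^sub>+\<^sub>1\<close>, then by the Enestrom-Kakeya argument all its roots satisfy \<open>|z| \<le> B\<close>.
  For the independence polynomial with coefficients \<open>i\<^sub>k\<close> and independence number \<open>\<alpha>\<close>,
  an independent \<open>k\<close>-set is either maximal or arises from an independent \<open>(k+1)\<close>-set
  by deleting one of its \<open>k+1\<close> vertices; since a maximum independent set is maximal of
  size \<open>\<alpha> \<noteq> k\<close>, this gives \<open>i\<^sub>k \<le> (mis(G) - 1) + (k+1) i\<^sub>k\<^sub>+\<^sub>1\<close> for \<open>k < \<alpha>\<close>.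
  As \<open>i\<^sub>k\<^sub>+\<^sub>1 \<ge> 1\<close>, \<open>k+1 \<le> n\<close> and the number \<open>mis(G)\<close> of maximal independent sets is at
  most \<open>3 powr (n/3)\<close> (Moon-Moser), we may take \<open>B = 3 powr (n/3) + n - 1\<close>.
\<close>

section \<open>The Enestrom-Kakeya bound\<close>

lemma one_minus_mult_sum_telescope:
  fixes b :: "nat \<Rightarrow> 'a::comm_ring_1"
  shows "(1 - w) * (\<Sum>k\<le>m. b k * w ^ k) =
    b 0 + (\<Sum>k<m. (b (Suc k) - b k) * w ^ Suc k) - b m * w ^ Suc m"
  by (induction m) (simp_all add: algebra_simps)

lemma enestrom_kakeya:
  fixes b :: "nat \<Rightarrow> real" and w :: complex
  assumes mono: "\<And>k. k < m \<Longrightarrow> b k \<le> b (Suc k)"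
    and "0 \<le> b 0" and "0 < b m"
    and root: "(\<Sum>k\<le>m. of_real (b k) * w ^ k) = 0"
  shows "cmod w \<le> 1"
proof (rule ccontr)
  assume "\<not> cmod w \<le> 1"
  then have w1: "1 < cmod w" by simp
  \<comment> \<open>Multiplying by \<open>1 - w\<close> expresses the top term by lower powers of \<open>w\<close> whose
    coefficients are nonnegative and sum to \<open>b m\<close>, too little weight when \<open>|w| > 1\<close>.\<close>
  have top: "of_real (b m) * w ^ Suc m = of_real (b 0) + (\<Sum>k<m. of_real (b (Suc k) - b k) * w ^ Suc k)"
    using one_minus_mult_sum_telescope[of w "\<lambda>k. of_real (b k)" m] root by simp
  have "b m * cmod w ^ Suc m = cmod (of_real (b m) * w ^ Suc m)"
    using \<open>0 < b m\<close> by (simp add: norm_mult norm_power)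
  also have "\<dots> \<le> b 0 + (\<Sum>k<m. (b (Suc k) - b k) * cmod w ^ Suc k)"
    unfolding top using \<open>0 \<le> b 0\<close> mono
    by (intro order.trans[OF norm_triangle_ineq] add_mono order.trans[OF norm_sum] sum_mono)
       (simp_all add: norm_mult norm_power del: of_real_diff)
  also have "\<dots> \<le> b 0 * cmod w ^ m + (\<Sum>k<m. (b (Suc k) - b k) * cmod w ^ m)"
  proof (intro add_mono sum_mono mult_left_mono)
    show "b 0 \<le> b 0 * cmod w ^ m"
      using \<open>0 \<le> b 0\<close> w1 by (simp add: mult_le_cancel_left1)
    show "cmod w ^ Suc k \<le> cmod w ^ m" if "k \<in> {..<m}" for k
      using that w1 by (intro power_increasing) auto
    show "0 \<le> b (Suc k) - b k" if "k \<in> {..<m}" for k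
      using that mono by simp
  qed
  also have "\<dots> = b m * cmod w ^ m"
    by (simp add: sum_distrib_right[symmetric] sum_lessThan_telescope distrib_right[symmetric])
  finally have "cmod w * cmod w ^ m \<le> 1 * cmod w ^ m"
    using \<open>0 < b m\<close> by simp
  moreover have "0 < cmod w ^ m"
    using w1 by (intro zero_less_power) linarith
  ultimately have "cmod w \<le> 1"
    by (subst (asm) mult_le_cancel_right_pos)
  with w1 show False
    by simp
qed

lemma enestrom_kakeya_ratio:
  fixes a :: "nat \<Rightarrow> real" and z :: complex
  assumes "0 < B"
    and ratio: "\<And>k. k < m \<Longrightarrow> a k \<le> B * a (Suc k)"
    and "0 \<le> a 0" and "0 < a m"
    and root: "(\<Sum>k\<le>m. of_real (a k) * z ^ k) = 0"
  shows "cmod z \<le> B"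
proof -
  have "cmod (z / of_real B) \<le> 1"
  proof (rule enestrom_kakeya[where b = "\<lambda>k. a k * B ^ k" and m = m])
    show "a k * B ^ k \<le> a (Suc k) * B ^ Suc k" if "k < m" for k
      using mult_right_mono[OF ratio[OF that], of "B ^ k"] \<open>0 < B\<close> by (simp add: algebra_simps)
    show "0 \<le> a 0 * B ^ 0" "0 < a m * B ^ m"
      using assms by simp_all
    have "of_real (a k * B ^ k) * (z / of_real B) ^ k = of_real (a k) * z ^ k" for k
      using \<open>0 < B\<close> by (simp add: power_divide)
    then show "(\<Sum>k\<le>m. of_real (a k * B ^ k) * (z / of_real B) ^ k) = 0"
      using root by (simp only:)
  qed
  with \<open>0 < B\<close> show ?thesis
    by (simp add: norm_divide divide_le_eq)
qed

section \<open>The Moon-Moser bound\<close>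

lemma cube_le_three_power: "m ^ 3 \<le> (3::nat) ^ m"
proof (induction m rule: less_induct)
  case (less m)
  show ?case
  proof (cases "m \<le> 3")
    case True
    then have "m \<in> {0, 1, 2, 3}" by auto
    then show ?thesis by auto
  next
    case False
    then obtain k where m: "m = Suc k" and "3 \<le> k"
      by (cases m) auto
    have "Suc k ^ 3 = k ^ 3 + 3 * k ^ 2 + 3 * k + 1"
      by (simp add: power2_eq_square power3_eq_cube algebra_simps)
    also have "\<dots> \<le> 3 * k ^ 3"
    proof -
      have "3 * k ^ 2 \<le> k ^ 3" "9 * k \<le> k ^ 3"
        using \<open>3 \<le> k\<close> mult_le_mono[OF \<open>3 \<le> k\<close> \<open>3 \<le> k\<close>]
        by (simp_all add: power2_eq_square power3_eq_cube)
      with \<open>3 \<le> k\<close> show ?thesis by linarith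
    qed
    also have "\<dots> \<le> 3 * 3 ^ k"
      using less.IH[of k] m by simp
    finally show ?thesis
      using m by simp
  qed
qed

lemma of_nat_le_three_powr: "real d \<le> 3 powr (real d / 3)"
proof -
  have "real d ^ 3 \<le> 3 ^ d"
    using cube_le_three_power[of d] by (metis of_nat_le_iff of_nat_power of_nat_numeral)
  also have "(3::real) ^ d = (3 powr (real d / 3)) ^ 3"
    by (simp add: powr_power powr_realpow)
  finally show ?thesis
    by (subst (asm) power_mono_iff) auto
qed

text \<open>Maximality is phrased as domination of \<open>V - S\<close>: for simple graphs this is the same as
  non-extendability (\<open>maximal_independent_setsI\<close>), and the Moon-Moser recursion then only
  needs \<open>E\<close> to be symmetric.\<close>
definition maximal_independent_sets :: "'a set \<Rightarrow> ('a \<Rightarrow> 'a \<Rightarrow> bool) \<Rightarrow> 'a set set" where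
  "maximal_independent_sets V E = {S. independent_set V E S \<and> (\<forall>x\<in>V - S. \<exists>y\<in>S. E x y)}"

definition closed_neighbourhood :: "'a set \<Rightarrow> ('a \<Rightarrow> 'a \<Rightarrow> bool) \<Rightarrow> 'a \<Rightarrow> 'a set" where
  "closed_neighbourhood V E u = {y\<in>V. y = u \<or> E u y}"

lemma finite_maximal_independent_sets:
  "finite V \<Longrightarrow> finite (maximal_independent_sets V E)"
  by (rule finite_subset[of _ "Pow V"]) (auto simp: maximal_independent_sets_def independent_set_def)

lemma maximal_independent_sets_empty: "maximal_independent_sets {} E = {{}}"
  by (auto simp: maximal_independent_sets_def independent_set_def)

lemma maximal_independent_sets_subset_UN_closed_neighbourhood:
  assumes "v \<in> V"
  shows "maximal_independent_sets V E \<subseteq>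
    (\<Union>u\<in>closed_neighbourhood V E v. {S \<in> maximal_independent_sets V E. u \<in> S})"
proof
  fix S assume S: "S \<in> maximal_independent_sets V E"
  then have "S \<subseteq> V"
    by (simp add: maximal_independent_sets_def independent_set_def)
  show "S \<in> (\<Union>u\<in>closed_neighbourhood V E v. {S \<in> maximal_independent_sets V E. u \<in> S})"
  proof (cases "v \<in> S")
    case True
    with S assms show ?thesis
      by (auto simp: closed_neighbourhood_def)
  next
    case False
    with S assms obtain y where "y \<in> S" "E v y"
      by (auto simp: maximal_independent_sets_def)
    with S \<open>S \<subseteq> V\<close> show ?thesis
      by (auto simp: closed_neighbourhood_def)
  qed
qed

lemma card_maximal_independent_sets_containing_le:
  assumes "finite V" "symp_on V E" "u \<in> V"
  shows "card {S \<in> maximal_independent_sets V E. u \<in> S}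
    \<le> card (maximal_independent_sets (V - closed_neighbourhood V E u) E)"
proof (rule card_inj_on_le[where f = "\<lambda>S. S - {u}"])
  show "inj_on (\<lambda>S. S - {u}) {S \<in> maximal_independent_sets V E. u \<in> S}"
    by (rule inj_onI) (metis (no_types, lifting) insert_Diff mem_Collect_eq)
  show "finite (maximal_independent_sets (V - closed_neighbourhood V E u) E)"
    using \<open>finite V\<close> by (simp add: finite_maximal_independent_sets)
  show "(\<lambda>S. S - {u}) ` {S \<in> maximal_independent_sets V E. u \<in> S}
      \<subseteq> maximal_independent_sets (V - closed_neighbourhood V E u) E"
  proof clarify
    fix S assume S: "S \<in> maximal_independent_sets V E" "u \<in> S"
    then have "S \<subseteq> V" and indep: "\<forall>x\<in>S. \<forall>y\<in>S. \<not> E x y"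
      and dom: "\<forall>x\<in>V - S. \<exists>y\<in>S. E x y"
      by (auto simp: maximal_independent_sets_def independent_set_def)
    have "independent_set (V - closed_neighbourhood V E u) E (S - {u})"
      using \<open>S \<subseteq> V\<close> indep \<open>u \<in> S\<close> by (auto simp: independent_set_def closed_neighbourhood_def)
    moreover have "\<exists>y\<in>S - {u}. E x y" if x: "x \<in> V - closed_neighbourhood V E u - (S - {u})" for x
    proof -
      from x have "x \<in> V - S" "\<not> E u x"
        by (auto simp: closed_neighbourhood_def)
      with dom obtain y where "y \<in> S" "E x y"
        by blast
      moreover have "y \<noteq> u"
        using \<open>E x y\<close> \<open>\<not> E u x\<close> \<open>x \<in> V - S\<close> \<open>symp_on V E\<close> \<open>u \<in> V\<close> by (metis DiffD1 symp_onD)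
      ultimately show ?thesis
        by blast
    qed
    ultimately show "S - {u} \<in> maximal_independent_sets (V - closed_neighbourhood V E u) E"
      by (simp add: maximal_independent_sets_def)
  qed
qed

lemma card_maximal_independent_sets_le_sum:
  assumes "finite V" "symp_on V E" "v \<in> V"
  shows "card (maximal_independent_sets V E) \<le>
    (\<Sum>u\<in>closed_neighbourhood V E v. card (maximal_independent_sets (V - closed_neighbourhood V E u) E))"
proof -
  let ?N = "closed_neighbourhood V E" and ?M = "maximal_independent_sets V E"
  have "?N v \<subseteq> V"
    by (auto simp: closed_neighbourhood_def)
  then have "finite (?N v)"
    using \<open>finite V\<close> by (rule finite_subset)
  have "card ?M \<le> card (\<Union>u\<in>?N v. {S \<in> ?M. u \<in> S})"
    using finite_maximal_independent_sets[OF \<open>finite V\<close>] \<open>finite (?N v)\<close>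
      maximal_independent_sets_subset_UN_closed_neighbourhood[OF \<open>v \<in> V\<close>, where E = E]
    by (intro card_mono) auto
  also have "\<dots> \<le> (\<Sum>u\<in>?N v. card {S \<in> ?M. u \<in> S})"
    by (rule card_UN_le[OF \<open>finite (?N v)\<close>])
  also have "\<dots> \<le> (\<Sum>u\<in>?N v. card (maximal_independent_sets (V - ?N u) E))"
    using \<open>?N v \<subseteq> V\<close> by (intro sum_mono card_maximal_independent_sets_containing_le assms(1,2)) blast
  finally show ?thesis .
qed

lemma card_maximal_independent_sets_le:
  assumes "finite V" "symp_on V E"
  shows "real (card (maximal_independent_sets V E)) \<le> 3 powr (real (card V) / 3)"
  using assms
proof (induction "card V" arbitrary: V rule: less_induct)
  \<comment> \<open>Branching on a vertex \<open>v\<close> with \<open>d = |N[v]|\<close> minimal, each of the \<open>d\<close> branches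
    removes at least \<open>d\<close> vertices, and \<open>d \<le> 3 powr (d/3)\<close> absorbs the branching factor.\<close>
  case less
  let ?N = "closed_neighbourhood V E" and ?M = "\<lambda>W. maximal_independent_sets W E"
  show ?case
  proof (cases "V = {}")
    case True
    then show ?thesis
      by (simp add: maximal_independent_sets_empty)
  next
    case False
    then obtain v where "v \<in> V" and v_min: "\<And>u. u \<in> V \<Longrightarrow> card (?N v) \<le> card (?N u)"
      using ex_has_least_nat[of "\<lambda>u. u \<in> V" _ "\<lambda>u. card (?N u)"] by blast
    define d where "d = card (?N v)"
    have N_sub: "?N u \<subseteq> V" for u
      by (auto simp: closed_neighbourhood_def)
    have fin_N: "finite (?N u)" for u
      using N_sub less.prems(1) by (rule finite_subset)
    have M_bound: "real (card (?M (V - ?N u))) \<le> 3 powr ((real (card V) - real d) / 3)"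
      if "u \<in> ?N v" for u
    proof -
      from that have "u \<in> V" "u \<in> ?N u"
        by (auto simp: closed_neighbourhood_def)
      then have card_eq: "card (V - ?N u) = card V - card (?N u)" and "0 < card (?N u)"
        using card_Diff_subset[OF fin_N N_sub] fin_N card_gt_0_iff by auto
      have "card (?N u) \<le> card V"
        using less.prems(1) N_sub by (rule card_mono)
      have "real (card (?M (V - ?N u))) \<le> 3 powr (real (card (V - ?N u)) / 3)"
        using \<open>0 < card (?N u)\<close> \<open>card (?N u) \<le> card V\<close> card_eq less.prems
        by (intro less.hyps) (auto intro: symp_on_subset)
      also have "\<dots> \<le> 3 powr ((real (card V) - real d) / 3)"
        using card_eq \<open>card (?N u) \<le> card V\<close> v_min[OF \<open>u \<in> V\<close>]
        by (intro powr_mono) (auto simp: d_def of_nat_diff)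
      finally show ?thesis .
    qed
    have "real (card (?M V)) \<le> (\<Sum>u\<in>?N v. real (card (?M (V - ?N u))))"
      using card_maximal_independent_sets_le_sum[OF less.prems \<open>v \<in> V\<close>]
      by (metis of_nat_le_iff of_nat_sum)
    also have "\<dots> \<le> (\<Sum>u\<in>?N v. 3 powr ((real (card V) - real d) / 3))"
      using M_bound by (rule sum_mono)
    also have "\<dots> = real d * 3 powr ((real (card V) - real d) / 3)"
      by (simp add: d_def)
    also have "\<dots> \<le> 3 powr (real d / 3) * 3 powr ((real (card V) - real d) / 3)"
      by (intro mult_right_mono of_nat_le_three_powr) simp
    also have "\<dots> = 3 powr (real (card V) / 3)"
      by (simp add: powr_add[symmetric] diff_divide_distrib)
    finally show ?thesis .
  qed
qed

section \<open>Coefficients of the independence polynomial\<close>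

definition independence_number :: "'a set \<Rightarrow> ('a \<Rightarrow> 'a \<Rightarrow> bool) \<Rightarrow> nat" where
  "independence_number V E = Max (card ` {S. independent_set V E S})"

definition indep_count :: "'a set \<Rightarrow> ('a \<Rightarrow> 'a \<Rightarrow> bool) \<Rightarrow> nat \<Rightarrow> nat" where
  "indep_count V E k = card {S. independent_set V E S \<and> card S = k}"

lemma finite_independent_sets: "finite V \<Longrightarrow> finite {S. independent_set V E S}"
  by (rule finite_subset[of _ "Pow V"]) (auto simp: independent_set_def)

lemma finite_independent_set: "finite V \<Longrightarrow> independent_set V E S \<Longrightarrow> finite S"
  by (meson finite_subset independent_set_def)

lemma independent_set_subset:
  "independent_set V E T \<Longrightarrow> S \<subseteq> T \<Longrightarrow> independent_set V E S"
  by (auto simp: independent_set_def)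

lemma card_le_independence_number:
  "finite V \<Longrightarrow> independent_set V E S \<Longrightarrow> card S \<le> independence_number V E"
  unfolding independence_number_def by (simp add: finite_independent_sets)

lemma obtain_maximum_independent_set:
  assumes "finite V"
  obtains T where "independent_set V E T" "card T = independence_number V E"
proof -
  have "independent_set V E {}"
    by (simp add: independent_set_def)
  then have "independence_number V E \<in> card ` {S. independent_set V E S}"
    unfolding independence_number_def using assms by (intro Max_in finite_imageI finite_independent_sets) auto
  then show ?thesis
    using that by force
qed

lemma independence_number_le_card: "finite V \<Longrightarrow> independence_number V E \<le> card V"
  by (metis obtain_maximum_independent_set card_mono independent_set_def)

lemma indep_count_pos:
  assumes "finite V" "k \<le> independence_number V E"
  shows "0 < indep_count V E k"
proof -
  obtain T where T: "independent_set V E T" "card T = independence_number V E"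
    using obtain_maximum_independent_set[OF \<open>finite V\<close>] .
  with assms obtain U where "U \<subseteq> T" "card U = k"
    by (metis obtain_subset_with_card_n)
  with T have "U \<in> {S. independent_set V E S \<and> card S = k}"
    by (simp add: independent_set_subset)
  moreover have "finite {S. independent_set V E S \<and> card S = k}"
    using finite_independent_sets[OF \<open>finite V\<close>] by (rule rev_finite_subset) blast
  ultimately show ?thesis
    unfolding indep_count_def by (auto simp: card_gt_0_iff)
qed

lemma poly_indep_poly:
  assumes "finite V"
  shows "poly (indep_poly V E) z = (\<Sum>k\<le>independence_number V E. of_nat (indep_count V E k) * z ^ k)"
proof -
  let ?I = "{S. independent_set V E S}"
  have "poly (indep_poly V E) z = (\<Sum>S\<in>?I. z ^ card S)"
    by (simp add: indep_poly_def poly_sum poly_monom)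
  also have "\<dots> = (\<Sum>k\<le>independence_number V E. \<Sum>S\<in>{S \<in> ?I. card S = k}. z ^ card S)"
    using assms by (intro sum.group[symmetric] finite_independent_sets)
      (auto simp: card_le_independence_number)
  also have "\<dots> = (\<Sum>k\<le>independence_number V E. of_nat (indep_count V E k) * z ^ k)"
    by (simp add: indep_count_def)
  finally show ?thesis .
qed

lemma maximal_independent_setsI:
  assumes "simple_graph V E" "independent_set V E S"
    and no_ext: "\<And>x. x \<in> V - S \<Longrightarrow> \<not> independent_set V E (insert x S)"
  shows "S \<in> maximal_independent_sets V E"
proof -
  have "\<exists>y\<in>S. E x y" if x: "x \<in> V - S" for x
  proof -
    have "S \<subseteq> V" and indep: "\<forall>p\<in>S. \<forall>q\<in>S. \<not> E p q"
      using \<open>independent_set V E S\<close> by (auto simp: independent_set_def)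
    with no_ext[OF x] x obtain p q where pq: "p \<in> insert x S" "q \<in> insert x S" "E p q"
      by (auto simp: independent_set_def)
    have "\<not> E x x" and sym: "\<And>y. y \<in> S \<Longrightarrow> E y x \<Longrightarrow> E x y"
      using \<open>simple_graph V E\<close> x \<open>S \<subseteq> V\<close> by (auto simp: simple_graph_def)
    with pq indep show ?thesis
      by auto
  qed
  with \<open>independent_set V E S\<close> show ?thesis
    by (simp add: maximal_independent_sets_def)
qed

lemma maximum_independent_set_maximal:
  assumes "simple_graph V E" "independent_set V E T" "card T = independence_number V E"
  shows "T \<in> maximal_independent_sets V E"
proof (rule maximal_independent_setsI[OF assms(1,2)])
  fix x assume x: "x \<in> V - T"
  have "finite V"
    using assms(1) by (simp add: simple_graph_def)
  then have "finite T"
    using assms(2) by (rule finite_independent_set)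
  with x assms(3) have "independence_number V E < card (insert x T)"
    by simp
  with \<open>finite V\<close> show "\<not> independent_set V E (insert x T)"
    using card_le_independence_number leD by blast
qed

lemma card_maximal_independent_sets_pos:
  assumes "simple_graph V E"
  shows "0 < card (maximal_independent_sets V E)"
proof -
  have "finite V"
    using assms by (simp add: simple_graph_def)
  obtain T where "independent_set V E T" "card T = independence_number V E"
    using obtain_maximum_independent_set[OF \<open>finite V\<close>] .
  with assms have "T \<in> maximal_independent_sets V E"
    by (rule maximum_independent_set_maximal)
  with finite_maximal_independent_sets[OF \<open>finite V\<close>] show ?thesis
    by (auto simp: card_gt_0_iff)
qed

lemma card_extendable_independent_sets_le:
  assumes "finite V"
  shows "card {S. independent_set V E S \<and> card S = k \<and> (\<exists>x\<in>V - S. independent_set V E (insert x S))}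
    \<le> Suc k * indep_count V E (Suc k)"
proof -
  let ?X = "{S. independent_set V E S \<and> card S = k \<and> (\<exists>x\<in>V - S. independent_set V E (insert x S))}"
  let ?A = "{T. independent_set V E T \<and> card T = Suc k}"
  have fin_A: "finite ?A"
    using finite_independent_sets[OF assms] by (rule rev_finite_subset) auto
  have fin_T: "finite T" if "T \<in> ?A" for T
    using assms that by (auto intro: finite_independent_set)
  have "?X \<subseteq> (\<Union>T\<in>?A. (\<lambda>x. T - {x}) ` T)"
  proof
    fix S assume "S \<in> ?X"
    then obtain x where S: "independent_set V E S" "card S = k" "x \<in> V - S"
      "independent_set V E (insert x S)"
      by blast
    then have "finite S"
      using assms by (auto intro: finite_independent_set)
    with S have "insert x S \<in> ?A"
      by auto
    moreover have "S \<in> (\<lambda>y. insert x S - {y}) ` insert x S"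
      using S by (intro image_eqI[where x = x]) auto
    ultimately show "S \<in> (\<Union>T\<in>?A. (\<lambda>x. T - {x}) ` T)"
      by (rule UN_I)
  qed
  then have "card ?X \<le> card (\<Union>T\<in>?A. (\<lambda>x. T - {x}) ` T)"
    by (rule card_mono[rotated]) (blast intro: finite_UN_I finite_imageI fin_A fin_T)
  also have "\<dots> \<le> (\<Sum>T\<in>?A. card ((\<lambda>x. T - {x}) ` T))"
    using card_UN_le[OF fin_A, of "\<lambda>T. (\<lambda>x. T - {x}) ` T"] by simp
  also have "\<dots> \<le> (\<Sum>T\<in>?A. Suc k)"
  proof (rule sum_mono)
    fix T assume T: "T \<in> ?A"
    then have "card T = Suc k"
      by blast
    then show "card ((\<lambda>x. T - {x}) ` T) \<le> Suc k"
      using card_image_le[OF fin_T[OF T], of "\<lambda>x. T - {x}"] by linarith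
  qed
  also have "\<dots> = Suc k * indep_count V E (Suc k)"
    by (simp add: indep_count_def)
  finally show ?thesis .
qed

lemma indep_count_recurrence:
  assumes "simple_graph V E" "k < independence_number V E"
  shows "indep_count V E k + 1 \<le> card (maximal_independent_sets V E) + Suc k * indep_count V E (Suc k)"
proof -
  let ?M = "maximal_independent_sets V E"
  let ?X = "{S. independent_set V E S \<and> card S = k \<and> (\<exists>x\<in>V - S. independent_set V E (insert x S))}"
  have "finite V"
    using assms(1) by (simp add: simple_graph_def)
  obtain T where T: "independent_set V E T" "card T = independence_number V E"
    using obtain_maximum_independent_set[OF \<open>finite V\<close>] .
  then have "T \<in> ?M"
    using assms(1) by (rule maximum_independent_set_maximal[rotated])
  have split: "{S. independent_set V E S \<and> card S = k} \<subseteq> (?M - {T}) \<union> ?X"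
  proof
    fix S assume S: "S \<in> {S. independent_set V E S \<and> card S = k}"
    show "S \<in> (?M - {T}) \<union> ?X"
    proof (cases "S \<in> ?X")
      case False
      with S have "S \<in> ?M"
        by (intro maximal_independent_setsI[OF assms(1)]) auto
      moreover have "S \<noteq> T"
        using S T assms(2) by auto
      ultimately show ?thesis
        by blast
    qed simp
  qed
  have "finite ?X"
    using finite_independent_sets[OF \<open>finite V\<close>] by (rule rev_finite_subset) blast
  then have "indep_count V E k \<le> card ((?M - {T}) \<union> ?X)"
    unfolding indep_count_def using split finite_maximal_independent_sets[OF \<open>finite V\<close>]
    by (intro card_mono) auto
  also have "\<dots> \<le> card (?M - {T}) + card ?X"
    by (rule card_Un_le)
  finally have "indep_count V E k \<le> card (?M - {T}) + card ?X" .
  moreover have "card (?M - {T}) + 1 = card ?M"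
    using card_Suc_Diff1[OF finite_maximal_independent_sets[OF \<open>finite V\<close>] \<open>T \<in> ?M\<close>]
    by simp
  ultimately show ?thesis
    using card_extendable_independent_sets_le[OF \<open>finite V\<close>, of E k] by linarith
qed

lemma indep_count_le_ratio:
  assumes "simple_graph V E" "k < independence_number V E"
  shows "real (indep_count V E k)
    \<le> (3 powr (real (card V) / 3) + real (card V) - 1) * real (indep_count V E (Suc k))"
proof -
  have "finite V" "symp_on V E"
    using assms(1) by (auto simp: simple_graph_def symp_on_def)
  define m where "m = real (card (maximal_independent_sets V E))"
  define c where "c = real (indep_count V E (Suc k))"
  define p where "p = 3 powr (real (card V) / 3)"
  have "1 \<le> c"
    using indep_count_pos[OF \<open>finite V\<close>, of "Suc k" E] assms(2) by (simp add: c_def)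
  have "1 \<le> m"
    using card_maximal_independent_sets_pos[OF assms(1)] by (simp add: m_def)
  have "Suc k \<le> card V"
    using assms(2) independence_number_le_card[OF \<open>finite V\<close>, of E] by linarith
  have "real (indep_count V E k) + 1 \<le> m + real (Suc k) * c"
    unfolding m_def c_def using indep_count_recurrence[OF assms]
    by (metis of_nat_1 of_nat_add of_nat_le_iff of_nat_mult)
  also have "\<dots> \<le> (m - 1) * c + 1 + real (card V) * c"
  proof -
    have "m - 1 \<le> (m - 1) * c"
      using \<open>1 \<le> m\<close> \<open>1 \<le> c\<close> mult_left_mono[of 1 c "m - 1"] by simp
    moreover have "real (Suc k) * c \<le> real (card V) * c"
      using \<open>Suc k \<le> card V\<close> \<open>1 \<le> c\<close> by (intro mult_right_mono) simp_all
    ultimately show ?thesis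
      by linarith
  qed
  also have "\<dots> \<le> (p - 1) * c + 1 + real (card V) * c"
    using card_maximal_independent_sets_le[OF \<open>finite V\<close> \<open>symp_on V E\<close>] \<open>1 \<le> c\<close>
    by (intro add_right_mono mult_right_mono) (simp_all add: m_def p_def)
  finally show ?thesis
    by (simp add: p_def c_def algebra_simps)
qed

theorem theorem3:
  fixes V :: "'a set" and E :: "'a \<Rightarrow> 'a \<Rightarrow> bool" and n :: nat and z :: complex
  assumes "n \<ge> 1"
    and "simple_graph V E"
    and "card V = n"
    and "independence_root V E z"
  shows "cmod z \<le> 3 powr (real n / 3) + real n - 1"
proof (rule enestrom_kakeya_ratio[where a = "\<lambda>k. real (indep_count V E k)"
      and m = "independence_number V E"])
  have "finite V"
    using assms(2) by (simp add: simple_graph_def)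
  have "0 < 3 powr (real n / 3)" "1 \<le> real n"
    using assms(1) by simp_all
  then show "0 < 3 powr (real n / 3) + real n - 1"
    by linarith
  show "real (indep_count V E k) \<le> (3 powr (real n / 3) + real n - 1) * real (indep_count V E (Suc k))"
    if "k < independence_number V E" for k
    using indep_count_le_ratio[OF assms(2) that] assms(3) by simp
  show "0 \<le> real (indep_count V E 0)"
    by simp
  show "0 < real (indep_count V E (independence_number V E))"
    using indep_count_pos[OF \<open>finite V\<close>] by simp
  show "(\<Sum>k\<le>independence_number V E. of_real (real (indep_count V E k)) * z ^ k) = 0"
    using assms(4) poly_indep_poly[OF \<open>finite V\<close>] by (simp add: independence_root_def)
qed

end
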